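(* Suppose $d=1$ and let $\lambda\in\mathbb R$. Then $L,(L^*+\lambda)^2$ is a Leonard pair on $\mathcal P_d(\mathbb R)$ if and only if $2\lambda\neq-1$.
   Context: Let $r,s\in(-1,\infty)$. Write $(x)_i=x(x+1)\cdots(x+i-1)$, $(x)_0=1$. For $0\le i\le d$ put $\theta_i=(d-i)(d-i+r+s+1)$ (distinct) and $\theta^*_i=i$. Put $b^*_i=\frac{(d-i)(i-d-s)(2d-2i+r+s+2)_i}{(2d-2i+r+s)_{i+1}}$ ($0\le i\le d-1$), $c^*_i=\frac{i(i-d-r-1)(d-i+r+s+1)_{d-i}}{(d-i+r+s+2)_{d-i+1}}$ ($1\le i\le d$), $b^*_d=c^*_0=0$, and $a^*_i=\theta^*_0-b^*_i-c^*_i$. Let $\mathcal P_d(\mathbb R)$ be the real polynomials of degree at most $d$, each determined by its values at $\theta_0,\dots,\theta_d$. Let $L,L^*$ be the linear maps on $\mathcal P_d(\mathbb R)$ with $(Lf)(\theta_i)=\theta_i f(\theta_i)$ and $(L^*f)(\theta_i)=b^*_i f(\theta_{i+1})+a^*_i f(\theta_i)+c^*_i f(\theta_{i-1})$ ($0\le i\le d$; terms with coefficient $b^*_d$ or $c^*_0$ omitted); $\lambda$ stands for $\lambda$ times the identity. A square matrix is irreducible tridiagonal if its nonzero entries lie on the diagonal, subdiagonal or superdiagonal and all subdiagonal and superdiagonal entries are nonzero. A Leonard pair on a nonzero finite-dimensional vector space $V$ is an ordered pair $A,A^*$ of linear maps on $V$ such that there is an ordered basis in which $A$ is diagonal and $A^*$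 is irreducible tridiagonal, and there is an ordered basis in which $A^*$ is diagonal and $A$ is irreducible tridiagonal. *)

theory Defs
  imports "HOL-Computational_Algebra.Polynomial"
begin

definition th :: "real \<Rightarrow> real \<Rightarrow> nat \<Rightarrow> nat \<Rightarrow> real" where
  "th r s d i = (real d - real i) * (real d - real i + r + s + 1)"

definition ths :: "nat \<Rightarrow> real" where
  "ths i = real i"

definition bs :: "real \<Rightarrow> real \<Rightarrow> nat \<Rightarrow> nat \<Rightarrow> real" where
  "bs r s d i = (if i < d then
     (real d - real i) * (real i - real d - s) * pochhammer (2 * real d - 2 * real i + r + s + 2) i
       / pochhammer (2 * real d - 2 * real i + r + s) (i + 1)
   else 0)"

definition cs :: "real \<Rightarrow> real \<Rightarrow> nat \<Rightarrow> nat \<Rightarrow> real" where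
  "cs r s d i = (if 1 \<le> i then
     real i * (real i - real d - r - 1) * pochhammer (real d - real i + r + s + 1) (d - i)
       / pochhammer (real d - real i + r + s + 2) (d - i + 1)
   else 0)"

definition as :: "real \<Rightarrow> real \<Rightarrow> nat \<Rightarrow> nat \<Rightarrow> real" where
  "as r s d i = ths 0 - bs r s d i - cs r s d i"

definition Pd :: "nat \<Rightarrow> real poly set" where
  "Pd d = {p. degree p \<le> d}"

definition LL :: "real \<Rightarrow> real \<Rightarrow> nat \<Rightarrow> real poly \<Rightarrow> real poly" where
  "LL r s d f = (THE g. degree g \<le> d \<and>
      (\<forall>i\<le>d. poly g (th r s d i) = th r s d i * poly f (th r s d i)))"

definition LLs :: "real \<Rightarrow> real \<Rightarrow> nat \<Rightarrow> real poly \<Rightarrow> real poly" where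
  "LLs r s d f = (THE g. degree g \<le> d \<and>
      (\<forall>i\<le>d. poly g (th r s d i) =
          (if i < d then bs r s d i * poly f (th r s d (i + 1)) else 0)
        + as r s d i * poly f (th r s d i)
        + (if 0 < i then cs r s d i * poly f (th r s d (i - 1)) else 0)))"

definition lin_on :: "real poly set \<Rightarrow> (real poly \<Rightarrow> real poly) \<Rightarrow> bool" where
  "lin_on V A \<longleftrightarrow> A ` V \<subseteq> V \<and>
     (\<forall>x\<in>V. \<forall>y\<in>V. A (x + y) = A x + A y) \<and>
     (\<forall>c. \<forall>x\<in>V. A (smult c x) = smult c (A x))"

definition ordered_basis :: "real poly set \<Rightarrow> nat \<Rightarrow> (nat \<Rightarrow> real poly) \<Rightarrow> bool" where
  "ordered_basis V n b \<longleftrightarrow> (\<forall>i<n. b i \<in> V) \<and>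
     (\<forall>c. (\<Sum>i<n. smult (c i) (b i)) = 0 \<longrightarrow> (\<forall>i<n. c i = 0)) \<and>
     (\<forall>v\<in>V. \<exists>c. v = (\<Sum>i<n. smult (c i) (b i)))"

definition represents :: "nat \<Rightarrow> (nat \<Rightarrow> real poly) \<Rightarrow> (real poly \<Rightarrow> real poly) \<Rightarrow> (nat \<Rightarrow> nat \<Rightarrow> real) \<Rightarrow> bool" where
  "represents n b A M \<longleftrightarrow> (\<forall>j<n. A (b j) = (\<Sum>i<n. smult (M i j) (b i)))"

definition diagonal_mat :: "nat \<Rightarrow> (nat \<Rightarrow> nat \<Rightarrow> real) \<Rightarrow> bool" where
  "diagonal_mat n M \<longleftrightarrow> (\<forall>i<n. \<forall>j<n. i \<noteq> j \<longrightarrow> M i j = 0)"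

definition irred_tridiagonal :: "nat \<Rightarrow> (nat \<Rightarrow> nat \<Rightarrow> real) \<Rightarrow> bool" where
  "irred_tridiagonal n M \<longleftrightarrow>
     (\<forall>i<n. \<forall>j<n. (i + 1 < j \<or> j + 1 < i) \<longrightarrow> M i j = 0) \<and>
     (\<forall>i. i + 1 < n \<longrightarrow> M (i + 1) i \<noteq> 0 \<and> M i (i + 1) \<noteq> 0)"

definition leonard_pair :: "real poly set \<Rightarrow> (real poly \<Rightarrow> real poly) \<Rightarrow> (real poly \<Rightarrow> real poly) \<Rightarrow> bool" where
  "leonard_pair V A As \<longleftrightarrow> lin_on V A \<and> lin_on V As \<and>
     (\<exists>n b M Ms. ordered_basis V n b \<and> represents n b A M \<and> represents n b As Ms \<and>
        diagonal_mat n M \<and> irred_tridiagonal n Ms) \<and>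
     (\<exists>n b M Ms. ordered_basis V n b \<and> represents n b A M \<and> represents n b As Ms \<and>
        irred_tridiagonal n M \<and> diagonal_mat n Ms)"

end

theory Submission
  imports Defs
begin

text \<open>For \<open>d = 1\<close> the nodes are \<open>\<theta>\<^sub>0 = r + s + 2\<close> and \<open>\<theta>\<^sub>1 = 0\<close>, and a polynomial
  of degree at most one is determined by its values there. On these value vectors \<open>L\<close> acts
  as \<open>diag(\<theta>\<^sub>0, 0)\<close> and \<open>L\<^sup>*\<close> as \<open>[[a, -a], [a - 1, 1 - a]]\<close> with \<open>a = a\<^sup>*\<^sub>0 \<in> (0, 1)\<close>,
  a matrix with eigenvalues \<open>0\<close> and \<open>1\<close>. Hence \<open>(L\<^sup>* + \<lambda>)\<^sup>2\<close> has eigenvalues \<open>\<lambda>\<^sup>2\<close> and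
  \<open>(\<lambda> + 1)\<^sup>2\<close>. If \<open>2\<lambda> = -1\<close> they coincide, so \<open>(L\<^sup>* + \<lambda>)\<^sup>2\<close> is scalar and is
  irreducible tridiagonal in no basis of the two-dimensional space. Otherwise the Lagrange basis
  and an eigenbasis of \<open>L\<^sup>*\<close> witness the Leonard pair, since no eigenvector of one of the two
  maps is an eigenvector of the other.\<close>

definition interp_line :: "real \<Rightarrow> real \<Rightarrow> real \<Rightarrow> real poly" where
  "interp_line t u v = [:v, (u - v) / t:]"

lemma degree_interp_line: "degree (interp_line t u v) \<le> 1"
  by (simp add: interp_line_def)

lemma poly_interp_line [simp]:
  "poly (interp_line t u v) 0 = v"
  "t \<noteq> 0 \<Longrightarrow> poly (interp_line t u v) t = u"
  by (simp_all add: interp_line_def)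

lemma interp_line_add: "interp_line t u v + interp_line t u' v' = interp_line t (u + u') (v + v')"
  by (simp add: interp_line_def diff_divide_distrib add_divide_distrib)

lemma smult_interp_line: "smult c (interp_line t u v) = interp_line t (c * u) (c * v)"
  by (simp add: interp_line_def right_diff_distrib)

lemma interp_line_poly:
  fixes f :: "real poly"
  assumes "t \<noteq> 0" "degree f \<le> 1"
  shows "interp_line t (poly f t) (poly f 0) = f"
proof -
  have "f = [:coeff f 0, coeff f 1:]"
    using assms(2) by (intro poly_eqI) (auto simp: coeff_pCons split: nat.split intro!: coeff_eq_0)
  then obtain c0 c1 where f: "f = [:c0, c1:]"
    by blast
  show ?thesis
    using assms(1) by (simp add: f interp_line_def)
qed

lemma degree_le_1_poly_eqI:
  fixes f g :: "real poly"
  assumes "t \<noteq> 0" "degree f \<le> 1" "degree g \<le> 1" "poly f t = poly g t" "poly f 0 = poly g 0"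
  shows "f = g"
proof -
  have "f = interp_line t (poly f t) (poly f 0)"
    by (rule interp_line_poly[OF assms(1,2), symmetric])
  also have "\<dots> = interp_line t (poly g t) (poly g 0)"
    by (simp only: assms(4,5))
  also have "\<dots> = g"
    by (rule interp_line_poly[OF assms(1,3)])
  finally show ?thesis .
qed

lemma the_interp_line:
  fixes x :: "nat \<Rightarrow> real"
  assumes "t \<noteq> 0" "x 0 = t" "x 1 = 0"
  shows "(THE g. degree g \<le> 1 \<and> (\<forall>i\<le>1. poly g (x i) = F i)) = interp_line t (F 0) (F 1)"
proof (rule the_equality)
  show "degree (interp_line t (F 0) (F 1)) \<le> 1 \<and> (\<forall>i\<le>1. poly (interp_line t (F 0) (F 1)) (x i) = F i)"
  proof (intro conjI allI impI)
    fix i :: nat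
    assume "i \<le> 1"
    then consider "i = 0" | "i = 1"
      by linarith
    then show "poly (interp_line t (F 0) (F 1)) (x i) = F i"
      by cases (simp_all add: assms(1,2) assms(3)[unfolded One_nat_def])
  qed (rule degree_interp_line)
  fix g
  assume "degree g \<le> 1 \<and> (\<forall>i\<le>1. poly g (x i) = F i)"
  then have deg: "degree g \<le> 1" and vals: "\<And>i. i \<le> 1 \<Longrightarrow> poly g (x i) = F i"
    by blast+
  have "g = interp_line t (poly g t) (poly g 0)"
    by (rule interp_line_poly[OF assms(1) deg, symmetric])
  also have "\<dots> = interp_line t (F 0) (F 1)"
    using vals[of 0] vals[of 1] assms(2,3) by simp
  finally show "g = interp_line t (F 0) (F 1)" .
qed

lemma mem_Pd [simp]: "f \<in> Pd d \<longleftrightarrow> degree f \<le> d"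
  by (simp add: Pd_def)

lemma sum_lessThan_2:
  fixes f :: "nat \<Rightarrow> 'a::comm_monoid_add"
  shows "(\<Sum>i<2. f i) = f 0 + f 1"
  by (simp add: numeral_2_eq_2)

lemma lin_on_comp:
  assumes "lin_on V A" "lin_on V B"
  shows "lin_on V (A \<circ> B)"
  using assms unfolding lin_on_def by (auto simp: image_subset_iff)

lemma lin_on_Pd_add_smult:
  assumes "lin_on (Pd d) A"
  shows "lin_on (Pd d) (\<lambda>f. A f + smult c f)"
  using assms unfolding lin_on_def
  by (auto simp: image_subset_iff smult_add_right algebra_simps
      intro!: degree_add_le order.trans[OF degree_smult_le])

definition eigvec :: "(real poly \<Rightarrow> real poly) \<Rightarrow> real poly \<Rightarrow> bool" where
  "eigvec A v \<longleftrightarrow> (\<exists>c. A v = smult c v)"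

lemma represents_eigvec_column:
  assumes b: "ordered_basis V n b" and M: "represents n b A M"
    and "j < n" "A (b j) = smult c (b j)" "i < n" "i \<noteq> j"
  shows "M i j = 0"
proof -
  have indep: "\<forall>i<n. d i = 0" if "(\<Sum>i<n. smult (d i) (b i)) = 0" for d
    using b that unfolding ordered_basis_def by blast
  have "(\<Sum>k<n. smult (M k j - (if k = j then c else 0)) (b k))
      = (\<Sum>k<n. smult (M k j) (b k)) - (\<Sum>k<n. if k = j then smult c (b j) else 0)"
    by (simp add: smult_diff_left sum_subtractf if_distrib[of "\<lambda>x. smult x _"] cong: if_cong)
  also have "\<dots> = 0"
    using M assms(3,4) by (simp add: represents_def)
  finally have "\<forall>k<n. M k j - (if k = j then c else 0) = 0"
    by (rule indep)
  then show ?thesis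
    using assms(5,6) by simp
qed

lemma diagonal_mat_if_eigvecs:
  assumes "ordered_basis V n b" "represents n b A M" "\<forall>j<n. eigvec A (b j)"
  shows "diagonal_mat n M"
  using assms represents_eigvec_column unfolding diagonal_mat_def eigvec_def by metis

lemma irred_tridiagonal_2I:
  assumes "represents 2 b A M" "\<not> eigvec A (b 0)" "\<not> eigvec A (b 1)"
  shows "irred_tridiagonal 2 M"
proof -
  have "A (b 0) = smult (M 0 0) (b 0) + smult (M 1 0) (b 1)"
    "A (b 1) = smult (M 0 1) (b 0) + smult (M 1 1) (b 1)"
    using assms(1) by (simp_all add: represents_def sum_lessThan_2)
  then have "M 1 0 \<noteq> 0" "M 0 1 \<noteq> 0"
    using assms(2,3) unfolding eigvec_def by auto
  then show ?thesis
    unfolding irred_tridiagonal_def by (auto simp: less_2_cases_iff)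
qed

lemma represents_exists:
  assumes "ordered_basis V n b" "\<forall>j<n. A (b j) \<in> V"
  shows "\<exists>M. represents n b A M"
proof -
  have "\<forall>j. \<exists>c. j < n \<longrightarrow> A (b j) = (\<Sum>i<n. smult (c i) (b i))"
    using assms unfolding ordered_basis_def by metis
  then obtain C where "\<forall>j. j < n \<longrightarrow> A (b j) = (\<Sum>i<n. smult (C j i) (b i))"
    by metis
  then have "represents n b A (\<lambda>i j. C j i)"
    by (simp add: represents_def)
  then show ?thesis
    by blast
qed

lemma leonard_pair_2I:
  assumes A: "lin_on V A" and As: "lin_on V As"
    and b: "ordered_basis V 2 b" "\<forall>j<2. eigvec A (b j) \<and> \<not> eigvec As (b j)"
    and b': "ordered_basis V 2 b'" "\<forall>j<2. eigvec As (b' j) \<and> \<not> eigvec A (b' j)"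
  shows "leonard_pair V A As"
proof -
  have maps_basis: "\<forall>j<2. F (c j) \<in> V" if "lin_on V F" "ordered_basis V 2 c" for F c
    using that unfolding lin_on_def ordered_basis_def by blast
  obtain M Ms M' Ms' where M: "represents 2 b A M" "represents 2 b As Ms"
    and M': "represents 2 b' A M'" "represents 2 b' As Ms'"
    using represents_exists maps_basis A As b(1) b'(1) by metis
  have "diagonal_mat 2 M" "irred_tridiagonal 2 Ms"
    using diagonal_mat_if_eigvecs[OF b(1) M(1)] irred_tridiagonal_2I[OF M(2)] b(2) by simp_all
  moreover have "irred_tridiagonal 2 M'" "diagonal_mat 2 Ms'"
    using diagonal_mat_if_eigvecs[OF b'(1) M'(2)] irred_tridiagonal_2I[OF M'(1)] b'(2) by simp_all
  ultimately show ?thesis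
    unfolding leonard_pair_def using A As b(1) b'(1) M M' by blast
qed

lemma scalar_not_leonard_pair:
  assumes "\<forall>v\<in>V. As v = smult c v" and "\<forall>n b. ordered_basis V n b \<longrightarrow> 2 \<le> n"
  shows "\<not> leonard_pair V A As"
proof
  assume "leonard_pair V A As"
  then obtain n b Ms where b: "ordered_basis V n b" and Ms: "represents n b As Ms"
    and irred: "irred_tridiagonal n Ms"
    unfolding leonard_pair_def by blast
  have n: "2 \<le> n"
    using assms(2) b by blast
  then have "b 0 \<in> V"
    using b unfolding ordered_basis_def by simp
  then have "Ms 1 0 = 0"
    using represents_eigvec_column[OF b Ms, of 0 c 1] assms(1) n by simp
  moreover have "Ms (0 + 1) 0 \<noteq> 0"
    using irred n unfolding irred_tridiagonal_def by simp
  ultimately show False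
    by simp
qed

lemma ordered_basis_Pd1I:
  fixes t :: real and b :: "nat \<Rightarrow> real poly"
  assumes "t \<noteq> 0" "degree (b 0) \<le> 1" "degree (b 1) \<le> 1"
    and det: "poly (b 0) t * poly (b 1) 0 - poly (b 1) t * poly (b 0) 0 \<noteq> 0"
  shows "ordered_basis (Pd 1) 2 b"
proof -
  define P0 P1 Q0 Q1 where "P0 = poly (b 0) t" and "P1 = poly (b 1) t"
    and "Q0 = poly (b 0) 0" and "Q1 = poly (b 1) 0"
  define D where "D = P0 * Q1 - P1 * Q0"
  have D: "D \<noteq> 0"
    using det by (simp add: D_def P0_def P1_def Q0_def Q1_def)
  have "c 0 = 0 \<and> c 1 = 0" if "smult (c 0) (b 0) + smult (c 1) (b 1) = 0" for c :: "nat \<Rightarrow> real"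
  proof -
    have "c 0 * P0 + c 1 * P1 = 0" "c 0 * Q0 + c 1 * Q1 = 0"
      using arg_cong[OF that, of "\<lambda>p. poly p t"] arg_cong[OF that, of "\<lambda>p. poly p 0"]
      by (simp_all add: P0_def P1_def Q0_def Q1_def)
    then have "c 0 * D = 0" "c 1 * D = 0"
      unfolding D_def by algebra+
    then show ?thesis
      using D by simp
  qed
  moreover have "\<exists>c :: nat \<Rightarrow> real. v = smult (c 0) (b 0) + smult (c 1) (b 1)" if "degree v \<le> 1" for v
  proof -
    define c where "c i = (if i = 0 then poly v t * Q1 - poly v 0 * P1
      else poly v 0 * P0 - poly v t * Q0) / D" for i :: nat
    have "v = smult (c 0) (b 0) + smult (c 1) (b 1)"
    proof (rule degree_le_1_poly_eqI[OF assms(1) that])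
      show "degree (smult (c 0) (b 0) + smult (c 1) (b 1)) \<le> 1"
        using assms(2,3) by (intro degree_add_le order.trans[OF degree_smult_le])
      show "poly v t = poly (smult (c 0) (b 0) + smult (c 1) (b 1)) t"
           "poly v 0 = poly (smult (c 0) (b 0) + smult (c 1) (b 1)) 0"
        using D by (simp_all add: c_def field_simps flip: P0_def P1_def Q0_def Q1_def del: One_nat_def)
          (simp_all add: D_def algebra_simps)
    qed
    then show ?thesis
      by blast
  qed
  ultimately show ?thesis
    using assms(2,3) unfolding ordered_basis_def sum_lessThan_2 less_2_cases_iff by auto
qed

lemma ordered_basis_Pd1_two_le:
  assumes "ordered_basis (Pd 1) n b"
  shows "2 \<le> n"
proof (rule ccontr)
  assume "\<not> 2 \<le> n"
  then have "n = 0 \<or> n = 1"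
    by auto
  have "1 \<in> Pd 1" "[:0, 1:] \<in> Pd 1"
    by simp_all
  then obtain c c' where one: "1 = (\<Sum>i<n. smult (c i) (b i))"
    and x: "[:0, 1:] = (\<Sum>i<n. smult (c' i) (b i))"
    using assms unfolding ordered_basis_def by meson
  show False
  proof (cases "n = 0")
    case True
    then show False
      using one by simp
  next
    case False
    with \<open>n = 0 \<or> n = 1\<close> have one': "1 = smult (c 0) (b 0)" and x': "[:0, 1:] = smult (c' 0) (b 0)"
      using one x by simp_all
    then have "c 0 \<noteq> 0"
      by auto
    then have "degree (b 0) = 0"
      using arg_cong[OF one', of degree] by simp
    moreover have "1 \<le> degree (b 0)"
      using arg_cong[OF x', of degree] degree_smult_le[of "c' 0" "b 0"] by simp
    ultimately show False
      by simp
  qed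
qed

lemma eigvec_Pd1_iff:
  fixes t :: real
  assumes "t \<noteq> 0" "degree v \<le> 1" "degree (A v) \<le> 1"
  shows "eigvec A v \<longleftrightarrow> (\<exists>c. poly (A v) t = c * poly v t \<and> poly (A v) 0 = c * poly v 0)"
  unfolding eigvec_def
  using degree_le_1_poly_eqI[OF assms(1,3) order.trans[OF degree_smult_le assms(2)]] by fastforce

definition LL1 :: "real \<Rightarrow> real poly \<Rightarrow> real poly" where
  "LL1 t f = interp_line t (t * poly f t) 0"

definition LLs1 :: "real \<Rightarrow> real \<Rightarrow> real poly \<Rightarrow> real poly" where
  "LLs1 t a f = interp_line t (a * (poly f t - poly f 0)) ((1 - a) * (poly f 0 - poly f t))"

lemma th_1: "th r s 1 0 = r + s + 2" "th r s 1 1 = 0"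
  by (simp_all add: th_def)

lemma LL_1:
  assumes "r + s + 2 \<noteq> 0"
  shows "LL r s 1 = LL1 (r + s + 2)"
proof
  fix f
  show "LL r s 1 f = LL1 (r + s + 2) f"
    unfolding LL_def LL1_def
    by (subst the_interp_line[OF assms, where x = "th r s 1"]) (simp_all add: th_1 del: One_nat_def)
qed

lemma LLs_1:
  assumes "r + s + 2 \<noteq> 0"
  shows "LLs r s 1 = LLs1 (r + s + 2) ((1 + s) / (r + s + 2))"
proof
  fix f
  define t where "t = r + s + 2"
  define a where "a = (1 + s) / t"
  have coeffs: "bs r s 1 0 = - a" "as r s 1 0 = a" "cs r s 1 1 = - (1 - a)" "as r s 1 1 = 1 - a"
    using assms by (simp_all add: as_def bs_def cs_def ths_def a_def t_def field_simps)
  have "LLs r s 1 f = interp_line t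
      (bs r s 1 0 * poly f 0 + as r s 1 0 * poly f t) (as r s 1 1 * poly f 0 + cs r s 1 1 * poly f t)"
    unfolding LLs_def t_def
    by (subst the_interp_line[OF assms, where x = "th r s 1"]) (simp_all add: th_1 del: One_nat_def)
  also have "\<dots> = LLs1 t a f"
    unfolding LLs1_def coeffs by (simp add: algebra_simps)
  finally show "LLs r s 1 f = LLs1 (r + s + 2) ((1 + s) / (r + s + 2)) f"
    unfolding a_def t_def .
qed

lemma lin_on_LL1: "lin_on (Pd 1) (LL1 t)"
  unfolding lin_on_def LL1_def
  by (auto simp: degree_interp_line interp_line_add smult_interp_line algebra_simps simp del: One_nat_def)

lemma lin_on_LLs1: "lin_on (Pd 1) (LLs1 t a)"
  unfolding lin_on_def LLs1_def
  by (auto simp: degree_interp_line interp_line_add smult_interp_line algebra_simps simp del: One_nat_def)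

lemma degree_LL1: "degree (LL1 t f) \<le> 1"
  unfolding LL1_def by (rule degree_interp_line)

lemma poly_LL1:
  "poly (LL1 t f) 0 = 0"
  "t \<noteq> 0 \<Longrightarrow> poly (LL1 t f) t = t * poly f t"
  by (simp_all add: LL1_def)

lemma degree_LLs1_shift:
  assumes "degree f \<le> 1"
  shows "degree (LLs1 t a f + smult lam f) \<le> 1"
  unfolding LLs1_def using assms
  by (intro degree_add_le degree_interp_line order.trans[OF degree_smult_le])

lemma poly_LLs1:
  "poly (LLs1 t a f) 0 = (1 - a) * (poly f 0 - poly f t)"
  "t \<noteq> 0 \<Longrightarrow> poly (LLs1 t a f) t = a * (poly f t - poly f 0)"
  by (simp_all add: LLs1_def)

lemma LLs1_shift_square_scalar:
  assumes "t \<noteq> 0" "2 * lam = -1" "degree f \<le> 1"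
  shows "((\<lambda>f. LLs1 t a f + smult lam f) \<circ> (\<lambda>f. LLs1 t a f + smult lam f)) f = smult (1 / 4) f"
    (is "?B2 f = _")
proof (rule degree_le_1_poly_eqI[OF assms(1)])
  have lam: "lam = - 1 / 2"
    using assms(2) by simp
  show "degree (?B2 f) \<le> 1"
    using assms(3) by (simp add: degree_LLs1_shift del: One_nat_def)
  show "degree (smult (1 / 4) f) \<le> 1"
    using assms(3) by (rule order.trans[OF degree_smult_le])
  show "poly (?B2 f) t = poly (smult (1 / 4) f) t" "poly (?B2 f) 0 = poly (smult (1 / 4) f) 0"
    by (simp_all add: poly_LLs1 assms(1) lam field_simps)
qed

definition lagrange_Pd1 :: "real \<Rightarrow> nat \<Rightarrow> real poly" where
  "lagrange_Pd1 t j = (if j = 0 then interp_line t 1 0 else interp_line t 0 1)"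

text \<open>Eigenvectors of \<open>LLs1 t a\<close> for the eigenvalues \<open>0\<close> and \<open>1\<close>.\<close>

definition eigenbasis_LLs1 :: "real \<Rightarrow> real \<Rightarrow> nat \<Rightarrow> real poly" where
  "eigenbasis_LLs1 t a j = (if j = 0 then 1 else interp_line t a (a - 1))"

lemma ordered_basis_lagrange_Pd1:
  assumes "t \<noteq> 0"
  shows "ordered_basis (Pd 1) 2 (lagrange_Pd1 t)"
  by (rule ordered_basis_Pd1I[OF assms])
    (simp_all add: lagrange_Pd1_def degree_interp_line assms del: One_nat_def)

lemma ordered_basis_eigenbasis_LLs1:
  assumes "t \<noteq> 0"
  shows "ordered_basis (Pd 1) 2 (eigenbasis_LLs1 t a)"
  by (rule ordered_basis_Pd1I[OF assms])
    (simp_all add: eigenbasis_LLs1_def degree_interp_line assms del: One_nat_def)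

lemma eigvecs_lagrange_Pd1:
  fixes t a lam :: real
  defines "B \<equiv> \<lambda>f. LLs1 t a f + smult lam f"
  assumes t: "t \<noteq> 0" and "a \<noteq> 0" "a \<noteq> 1" "2 * lam \<noteq> -1"
  shows "\<forall>j<2. eigvec (LL1 t) (lagrange_Pd1 t j) \<and> \<not> eigvec (B \<circ> B) (lagrange_Pd1 t j)"
proof -
  have deg: "degree (lagrange_Pd1 t j) \<le> 1" "degree (LL1 t (lagrange_Pd1 t j)) \<le> 1"
    "degree ((B \<circ> B) (lagrange_Pd1 t j)) \<le> 1" for j
    by (simp_all add: lagrange_Pd1_def B_def degree_interp_line degree_LL1 degree_LLs1_shift
        del: One_nat_def)
  have "(a - 1) * (1 + 2 * lam) \<noteq> 0" "a * (1 + 2 * lam) \<noteq> 0"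
    using assms(3-5) by auto
  then have "poly ((B \<circ> B) (lagrange_Pd1 t 0)) 0 \<noteq> 0" "poly ((B \<circ> B) (lagrange_Pd1 t 1)) t \<noteq> 0"
    by (simp_all add: B_def lagrange_Pd1_def poly_LLs1 t algebra_simps)
  then have "\<not> eigvec (B \<circ> B) (lagrange_Pd1 t j)" if "j < 2" for j
    using that eigvec_Pd1_iff[where A = "B \<circ> B", OF t deg(1,3)[of j]]
    by (auto simp: less_2_cases_iff lagrange_Pd1_def t)
  moreover have "eigvec (LL1 t) (lagrange_Pd1 t j)" if "j < 2" for j
    using that eigvec_Pd1_iff[where A = "LL1 t", OF t deg(1,2)[of j]]
    by (auto simp: less_2_cases_iff lagrange_Pd1_def poly_LL1 t)
  ultimately show ?thesis
    by blast
qed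

lemma eigvecs_eigenbasis_LLs1:
  fixes t a lam :: real
  defines "B \<equiv> \<lambda>f. LLs1 t a f + smult lam f"
  assumes t: "t \<noteq> 0" and "a \<noteq> 0" "a \<noteq> 1"
  shows "\<forall>j<2. eigvec (B \<circ> B) (eigenbasis_LLs1 t a j) \<and> \<not> eigvec (LL1 t) (eigenbasis_LLs1 t a j)"
proof -
  have deg: "degree (eigenbasis_LLs1 t a j) \<le> 1" "degree (LL1 t (eigenbasis_LLs1 t a j)) \<le> 1"
    "degree ((B \<circ> B) (eigenbasis_LLs1 t a j)) \<le> 1" for j
    by (simp_all add: eigenbasis_LLs1_def B_def degree_interp_line degree_LL1 degree_LLs1_shift
        del: One_nat_def)
  have "\<exists>c. poly ((B \<circ> B) (eigenbasis_LLs1 t a j)) t = c * poly (eigenbasis_LLs1 t a j) t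
      \<and> poly ((B \<circ> B) (eigenbasis_LLs1 t a j)) 0 = c * poly (eigenbasis_LLs1 t a j) 0" if "j < 2" for j
  proof (cases "j = 0")
    case True
    then show ?thesis
      by (intro exI[of _ "lam ^ 2"]) (simp add: B_def eigenbasis_LLs1_def poly_LLs1 t power2_eq_square)
  next
    case False
    then show ?thesis
      by (intro exI[of _ "(1 + lam) ^ 2"])
        (simp add: B_def eigenbasis_LLs1_def poly_LLs1 t power2_eq_square algebra_simps)
  qed
  then have "eigvec (B \<circ> B) (eigenbasis_LLs1 t a j)" if "j < 2" for j
    using that eigvec_Pd1_iff[where A = "B \<circ> B", OF t deg(1,3)[of j]] by blast
  moreover have "\<not> eigvec (LL1 t) (eigenbasis_LLs1 t a j)" if "j < 2" for j
    using that eigvec_Pd1_iff[where A = "LL1 t", OF t deg(1,2)[of j]] assms(3,4)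
    by (auto simp: less_2_cases_iff eigenbasis_LLs1_def poly_LL1 t)
  ultimately show ?thesis
    by blast
qed

lemma leonard_pair_LL1_shift_square_iff:
  assumes "t \<noteq> 0" "a \<noteq> 0" "a \<noteq> 1"
  shows "leonard_pair (Pd 1) (LL1 t) ((\<lambda>f. LLs1 t a f + smult lam f) \<circ> (\<lambda>f. LLs1 t a f + smult lam f))
    \<longleftrightarrow> 2 * lam \<noteq> -1"
proof
  assume "2 * lam \<noteq> -1"
  then show "leonard_pair (Pd 1) (LL1 t)
      ((\<lambda>f. LLs1 t a f + smult lam f) \<circ> (\<lambda>f. LLs1 t a f + smult lam f))"
    using assms
    by (intro leonard_pair_2I[where b = "lagrange_Pd1 t" and b' = "eigenbasis_LLs1 t a"]
        lin_on_LL1 lin_on_comp lin_on_Pd_add_smult lin_on_LLs1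
        ordered_basis_lagrange_Pd1 ordered_basis_eigenbasis_LLs1
        eigvecs_lagrange_Pd1 eigvecs_eigenbasis_LLs1)
next
  assume "leonard_pair (Pd 1) (LL1 t) ((\<lambda>f. LLs1 t a f + smult lam f) \<circ> (\<lambda>f. LLs1 t a f + smult lam f))"
  moreover have "\<not> leonard_pair (Pd 1) (LL1 t) ((\<lambda>f. LLs1 t a f + smult lam f) \<circ> (\<lambda>f. LLs1 t a f + smult lam f))"
    if "2 * lam = -1"
    using LLs1_shift_square_scalar[OF assms(1) that] ordered_basis_Pd1_two_le
    by (intro scalar_not_leonard_pair) auto
  ultimately show "2 * lam \<noteq> -1"
    by blast
qed

theorem corollary2p10:
  fixes r s lam :: real
  assumes "r > -1" and "s > -1"
  shows "leonard_pair (Pd 1) (LL r s 1)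
           ((\<lambda>f. LLs r s 1 f + smult lam f) \<circ> (\<lambda>f. LLs r s 1 f + smult lam f))
         \<longleftrightarrow> 2 * lam \<noteq> -1"
proof -
  have t: "r + s + 2 \<noteq> 0"
    using assms by simp
  have "(1 + s) / (r + s + 2) \<noteq> 0" "(1 + s) / (r + s + 2) \<noteq> 1"
    using assms t by (simp_all add: field_simps)
  then show ?thesis
    unfolding LL_1[OF t] LLs_1[OF t] by (intro leonard_pair_LL1_shift_square_iff t) simp_all
qed

end
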